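(* Let ${\cal D}$ be a set of directions with $0\le\alpha({\cal D})\le\pi/2$, and let $r=1-O(\sqrt{\log n/n})$ (i.e. $r = 1 - c\sqrt{\log n / n}$ for a fixed constant $c>0$). Then the set of points of the unit disk $B_1$ that are unsafe relative to $B_r$ can be covered by a union of $O(1)$ caps of $B_1$, where the base of each such cap has length $O((\log n/n)^{1/4})$ and its height is $O(\sqrt{\log n/n})$.
   Context: $B_r$ denotes the disk of radius $r$ centered at the origin $o$. A cap of $B_1$ is a region of $B_1$ cut off by a chord (its base); its height is the maximal distance from the chord to the arc. A set of directions is a set ${\cal D}$ of unit vectors in $\mathbb{R}^2$ such that $v\in{\cal D}$ implies $-v\in{\cal D}$. A pair $v_1,v_2\in{\cal D}$ is a ${\cal D}$-pair if $v_2$ is counterclockwise from $v_1$ and no vector of ${\cal D}$ lies strictly between them; $\alpha({\cal D})$ is the maximum over ${\cal D}$-pairs of the counterclockwise angle from $v_1$ to $v_2$. With $\mathrm{pspan}(u_1,u_2)$ the open wedge of positive combinations, ${\cal Q}({\cal D})$ consists of the open half-planes bounded by lines through the origin with direction in ${\cal D}$ together with the wedges $\mathrm{pspan}(-v_1,v_2)$ and $\mathrm{pspan}(v_1,-v_2)$ for every ${\cal D}$-pair $(v_1,v_2)$; ${\cal T}({\cal D})$ is the set of all their translates, and $\mathcal{CH}_{{\cal D}}(S)=\mathbb{R}^2\setminus\bigcup\{I\in{\cal T}({\cal D}) : I\cap S=\emptyset\}$. A point $p\in B_1$ is safe relative to $B_r$ if the segment $op$ is contained in $\mathcal{CH}_{{\cal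 D}}(B_r\cup\{p\})$; otherwise it is unsafe. The implied constants in $O(\cdot)$ may depend on the constant in the definition of $r$ but not on $n$ or ${\cal D}$. *)

theory Defs
  imports "HOL-Analysis.Analysis"
begin

text \<open>The plane R^2 is modelled by the type complex. Points are complex numbers.\<close>

definition direction_set :: "complex set \<Rightarrow> bool" where
  "direction_set D \<longleftrightarrow> (\<forall>v\<in>D. norm v = 1 \<and> - v \<in> D)"

definition ccw_angle :: "complex \<Rightarrow> complex \<Rightarrow> real" where
  "ccw_angle u v = (let a = Arg (v / u) in if a < 0 then a + 2 * pi else a)"

definition D_pair :: "complex set \<Rightarrow> complex \<Rightarrow> complex \<Rightarrow> bool" where
  "D_pair D v1 v2 \<longleftrightarrow> v1 \<in> D \<and> v2 \<in> D \<and> v1 \<noteq> v2 \<and>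
     \<not> (\<exists>w\<in>D. 0 < ccw_angle v1 w \<and> ccw_angle v1 w < ccw_angle v1 v2)"

definition alpha_dirs :: "complex set \<Rightarrow> real" where
  "alpha_dirs D = (if \<exists>v1 v2. D_pair D v1 v2
     then Sup {ccw_angle v1 v2 | v1 v2. D_pair D v1 v2} else 0)"

definition pspan :: "complex \<Rightarrow> complex \<Rightarrow> complex set" where
  "pspan u1 u2 = {a *\<^sub>R u1 + b *\<^sub>R u2 | a b. a > 0 \<and> b > 0}"

text \<open>Open half-planes bounded by the line through the origin with direction v
  (Im (cnj v * x) is the cross product v x x).\<close>
definition open_halfplanes :: "complex \<Rightarrow> complex set set" where
  "open_halfplanes v = {{x. 0 < Im (cnj v * x)}, {x. Im (cnj v * x) < 0}}"

definition Q_dirs :: "complex set \<Rightarrow> complex set set" where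
  "Q_dirs D = (\<Union>v\<in>D. open_halfplanes v) \<union>
     {W. \<exists>v1 v2. D_pair D v1 v2 \<and> (W = pspan (- v1) v2 \<or> W = pspan v1 (- v2))}"

definition T_dirs :: "complex set \<Rightarrow> complex set set" where
  "T_dirs D = {(\<lambda>x. p + x) ` Q | p Q. Q \<in> Q_dirs D}"

definition CH_dirs :: "complex set \<Rightarrow> complex set \<Rightarrow> complex set" where
  "CH_dirs D S = UNIV - \<Union>{I \<in> T_dirs D. I \<inter> S = {}}"

definition safe_pt :: "complex set \<Rightarrow> real \<Rightarrow> complex \<Rightarrow> bool" where
  "safe_pt D r p \<longleftrightarrow> closed_segment 0 p \<subseteq> CH_dirs D (cball 0 r \<union> {p})"

definition unsafe_set :: "complex set \<Rightarrow> real \<Rightarrow> complex set" where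
  "unsafe_set D r = {p \<in> cball 0 1. \<not> safe_pt D r p}"

text \<open>The cap of the unit disk cut off by the chord {x. x \<bullet> u = t} on the side of u
  (u a unit vector, -1 < t < 1). Its base (chord) has length 2 sqrt(1 - t^2) and
  its height is 1 - t. Every cap of B_1 is of this form.\<close>
definition cap :: "complex \<Rightarrow> real \<Rightarrow> complex set" where
  "cap u t = {x. norm x \<le> 1 \<and> x \<bullet> u \<ge> t}"

definition cap_base :: "real \<Rightarrow> real" where
  "cap_base t = 2 * sqrt (1 - t\<^sup>2)"

definition cap_height :: "real \<Rightarrow> real" where
  "cap_height t = 1 - t"

end

theory Submission
  imports Defs
begin

text \<open>If p is unsafe, some translate of a region of Q(D) avoids B_r and p but meets the
  segment op. A translated half-plane cannot do this, since its complement is convex. A translated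
  wedge spanned by -v1 and v2 (or by v1 and -v2) for a D-pair of angle at most pi/2 can do it only
  if the sine of that angle exceeds r and p lies in one of the caps {x. x \<bullet> w \<ge> r} with
  w = -v1, v2 (resp. v1, -v2). Such caps have height 1 - r and base 2 sqrt(1 - r^2), which is
  O(sqrt(1 - r)). For r > 9/10 the D-pairs of sine above r have angle above pi/3, so their first
  vectors are pairwise more than 1 apart on the unit circle; at most one of them lies in each
  cell of a grid of mesh 1/2, so there are at most 25 such pairs and 100 caps.\<close>

lemma Im_cnj_mult_eq_inner: "Im (cnj v * x) = (\<i> * v) \<bullet> x"
  by (simp add: inner_complex_def algebra_simps)

lemma Re_cnj_mult_eq_inner: "Re (cnj u * v) = u \<bullet> v"
  by (simp add: inner_complex_def)

lemma norm_scaleR_add_scaleR_sq: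
  fixes u v :: "'a::real_inner"
  assumes "norm u = 1" "norm v = 1"
  shows "(norm (a *\<^sub>R u + b *\<^sub>R v))\<^sup>2 = a\<^sup>2 + b\<^sup>2 + 2 * a * b * (u \<bullet> v)"
proof -
  have "u \<bullet> u = 1" "v \<bullet> v = 1" using assms by (simp_all flip: power2_norm_eq_inner)
  moreover have "(norm (a *\<^sub>R u + b *\<^sub>R v))\<^sup>2
      = a * a * (u \<bullet> u) + b * b * (v \<bullet> v) + 2 * a * b * (u \<bullet> v)"
    by (simp add: power2_norm_eq_inner inner_add_left inner_add_right inner_commute algebra_simps)
  ultimately show ?thesis by (simp add: power2_eq_square)
qed

lemma complex_eq_scaleR_combination:
  fixes u v x :: complex
  assumes "Im (cnj u * v) \<noteq> 0"
  shows "x = (Im (cnj x * v) / Im (cnj u * v)) *\<^sub>R u + (Im (cnj u * x) / Im (cnj u * v)) *\<^sub>R v"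
proof -
  let ?s = "Im (cnj u * v)"
  have "?s *\<^sub>R x = Im (cnj x * v) *\<^sub>R u + Im (cnj u * x) *\<^sub>R v"
    by (auto intro!: complex_eqI simp: algebra_simps)
  then have "x = (1 / ?s) *\<^sub>R (Im (cnj x * v) *\<^sub>R u + Im (cnj u * x) *\<^sub>R v)"
    using assms by (metis divideR_right scaleR_scaleR field_class.field_divide_inverse mult_1)
  then show ?thesis by (simp add: scaleR_add_right)
qed

lemma inner_sq_add_Im_cnj_mult_sq:
  fixes u v :: complex
  assumes "norm u = 1" "norm v = 1"
  shows "(u \<bullet> v)\<^sup>2 + (Im (cnj u * v))\<^sup>2 = 1"
proof -
  have "norm (cnj u * v) = 1" using assms by (simp add: norm_mult)
  then have "(Re (cnj u * v))\<^sup>2 + (Im (cnj u * v))\<^sup>2 = 1" by (metis cmod_power2 power_one)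
  then show ?thesis by (simp only: Re_cnj_mult_eq_inner)
qed

lemma cis_Arg_unit: "norm z = 1 \<Longrightarrow> cis (Arg z) = z"
  using cis_Arg[of z] by (cases "z = 0") (simp_all add: sgn_div_norm)

lemma cis_ccw_angle:
  assumes "norm u = 1" "norm v = 1"
  shows "cis (ccw_angle u v) = cnj u * v"
proof -
  have "inverse u = cnj u"
    using assms complex_norm_square[of u] by (intro inverse_unique) simp
  then have "v / u = cnj u * v" by (simp add: divide_inverse mult.commute)
  moreover have "norm (cnj u * v) = 1" using assms by (simp add: norm_mult)
  ultimately have "cis (Arg (v / u)) = cnj u * v" by (simp add: cis_Arg_unit)
  then show ?thesis by (simp add: ccw_angle_def Let_def cis_mult[symmetric])
qed

lemma cos_ccw_angle: "norm u = 1 \<Longrightarrow> norm v = 1 \<Longrightarrow> cos (ccw_angle u v) = u \<bullet> v"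
  using cis_ccw_angle[of u v] Re_cnj_mult_eq_inner[of u v] by (metis cis.sel(1))

lemma sin_ccw_angle: "norm u = 1 \<Longrightarrow> norm v = 1 \<Longrightarrow> sin (ccw_angle u v) = Im (cnj u * v)"
  using cis_ccw_angle[of u v] by (metis cis.sel(2))

lemma ccw_angle_nonneg: "0 \<le> ccw_angle u v"
  and ccw_angle_less_2pi: "ccw_angle u v < 2 * pi"
  unfolding ccw_angle_def Let_def using Arg_bounded[of "v / u"] by auto

lemma ccw_angle_pos:
  assumes "norm u = 1" "norm v = 1" "u \<noteq> v"
  shows "0 < ccw_angle u v"
proof -
  have "ccw_angle u v \<noteq> 0"
  proof
    assume "ccw_angle u v = 0"
    then have "cnj u * v = 1" using cis_ccw_angle[OF assms(1,2)] by simp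
    have "v = (u * cnj u) * v"
      using assms(1) complex_norm_square[of u] by simp
    also have "\<dots> = u" using \<open>cnj u * v = 1\<close> by (simp add: mult.assoc)
    finally show False using assms(3) by simp
  qed
  then show ?thesis using ccw_angle_nonneg[of u v] by linarith
qed

lemma ccw_angle_add_swap:
  assumes "norm u = 1" "norm v = 1" "u \<noteq> v"
  shows "ccw_angle u v + ccw_angle v u = 2 * pi"
proof -
  define z where "z = v / u"
  have z1: "z \<noteq> 1" using assms by (auto simp: z_def)
  have "norm z = 1" using assms by (simp add: z_def norm_divide)
  then have "Arg z \<noteq> 0" using z1 cis_Arg_unit[of z] by auto
  have uv: "ccw_angle u v = (if Arg z < 0 then Arg z + 2 * pi else Arg z)"
    and vu: "ccw_angle v u = (if Arg (inverse z) < 0 then Arg (inverse z) + 2 * pi else Arg (inverse z))"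
    by (simp_all add: ccw_angle_def Let_def z_def inverse_divide)
  have "Arg (inverse z) = (if z \<in> \<real> then Arg z else - Arg z)" by (rule Arg_inverse)
  moreover have "z \<in> \<real> \<Longrightarrow> Arg z = pi" using Arg_eq_0_pi \<open>Arg z \<noteq> 0\<close> by blast
  ultimately show ?thesis
    using uv vu \<open>Arg z \<noteq> 0\<close> Arg_bounded[of z] by (simp split: if_splits)
qed

lemma D_pair_unit:
  assumes "direction_set D" "D_pair D v1 v2"
  shows "norm v1 = 1" "norm v2 = 1"
  using assms unfolding direction_set_def D_pair_def by auto

lemma D_pair_angle_le:
  assumes D: "direction_set D" and p: "D_pair D v1 v2" and w: "w \<in> D" "w \<noteq> v1"
  shows "ccw_angle v1 v2 \<le> ccw_angle v1 w"
proof -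
  have "norm w = 1" using D w(1) unfolding direction_set_def by auto
  then have "0 < ccw_angle v1 w" using ccw_angle_pos D_pair_unit[OF D p] w(2) by metis
  then show ?thesis using p w(1) unfolding D_pair_def by (meson not_less)
qed

lemma D_pair_unique:
  assumes D: "direction_set D" and p: "D_pair D v1 v2" and q: "D_pair D v1 w2"
  shows "v2 = w2"
proof -
  have "ccw_angle v1 v2 = ccw_angle v1 w2"
    using D_pair_angle_le[OF D p, of w2] D_pair_angle_le[OF D q, of v2] p q
    unfolding D_pair_def by force
  then have "cnj v1 * v2 = cnj v1 * w2"
    using cis_ccw_angle D_pair_unit[OF D p] D_pair_unit[OF D q] by metis
  moreover have "cnj v1 \<noteq> 0" using D_pair_unit[OF D p] by auto
  ultimately show ?thesis by simp
qed

lemma D_pair_angle_le_alpha: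
  assumes "D_pair D v1 v2"
  shows "ccw_angle v1 v2 \<le> alpha_dirs D"
proof -
  have "bdd_above {ccw_angle v1 v2 | v1 v2. D_pair D v1 v2}"
    by (rule bdd_aboveI[of _ "2 * pi"]) (auto intro: less_imp_le ccw_angle_less_2pi)
  then show ?thesis using assms unfolding alpha_dirs_def by (auto intro!: cSup_upper)
qed

lemma D_pair_acute:
  assumes D: "direction_set D" and al: "alpha_dirs D \<le> pi / 2" and p: "D_pair D v1 v2"
  shows "0 \<le> v1 \<bullet> v2" "0 < Im (cnj v1 * v2)"
proof -
  have n: "norm v1 = 1" "norm v2 = 1" using D_pair_unit[OF D p] by auto
  have pos: "0 < ccw_angle v1 v2" using ccw_angle_pos n p unfolding D_pair_def by auto
  have le: "ccw_angle v1 v2 \<le> pi / 2" using D_pair_angle_le_alpha[OF p] al by linarith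
  show "0 \<le> v1 \<bullet> v2" using cos_ge_zero[of "ccw_angle v1 v2"] pos le cos_ccw_angle[OF n] by simp
  show "0 < Im (cnj v1 * v2)" using sin_gt_zero[of "ccw_angle v1 v2"] pos le sin_ccw_angle[OF n] by simp
qed

lemma D_pair_inner_ge:
  assumes D: "direction_set D" and p: "D_pair D v1 v2" and w: "w \<in> D" "w \<noteq> v1"
    and half: "ccw_angle v1 w \<le> pi"
  shows "v1 \<bullet> w \<le> v1 \<bullet> v2"
proof -
  have n: "norm v1 = 1" "norm v2 = 1" "norm w = 1"
    using D_pair_unit[OF D p] D w(1) unfolding direction_set_def by auto
  have "cos (ccw_angle v1 w) \<le> cos (ccw_angle v1 v2)"
    using D_pair_angle_le[OF D p w] half ccw_angle_nonneg by (intro cos_monotone_0_pi_le) auto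
  then show ?thesis using cos_ccw_angle n by metis
qed

lemma D_pair_firsts_inner_lt:
  assumes D: "direction_set D" and p: "D_pair D v1 v2" "v1 \<bullet> v2 < 1 / 2"
    and q: "D_pair D w1 w2" "w1 \<bullet> w2 < 1 / 2" and ne: "v1 \<noteq> w1"
  shows "v1 \<bullet> w1 < 1 / 2"
proof (cases "ccw_angle v1 w1 \<le> pi")
  case True
  then show ?thesis using D_pair_inner_ge[OF D p(1) _ ne[symmetric]] p(2) q(1)
    unfolding D_pair_def by fastforce
next
  case False
  have "ccw_angle w1 v1 \<le> pi"
    using False ccw_angle_add_swap D_pair_unit[OF D p(1)] D_pair_unit[OF D q(1)] ne by fastforce
  then show ?thesis using D_pair_inner_ge[OF D q(1) _ ne] q(2) p(1)
    unfolding D_pair_def by (fastforce simp: inner_commute)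
qed

lemma abs_diff_less_one_if_floor_eq:
  fixes a b :: real
  assumes "\<lfloor>a\<rfloor> = \<lfloor>b\<rfloor>"
  shows "\<bar>a - b\<bar> < 1"
  using floor_correct[of a] floor_correct[of b] unfolding assms abs_less_iff by linarith

lemma card_separated_subset_unit_disc:
  fixes S :: "complex set"
  assumes disc: "S \<subseteq> cball 0 1"
    and sep: "\<And>x y. x \<in> S \<Longrightarrow> y \<in> S \<Longrightarrow> x \<noteq> y \<Longrightarrow> 1 \<le> dist x y"
  shows "finite S" "card S \<le> 25"
proof -
  define cell where "cell = (\<lambda>x::complex. (\<lfloor>2 * Re x\<rfloor>, \<lfloor>2 * Im x\<rfloor>))"
  have inj: "inj_on cell S"
  proof (rule inj_onI, rule ccontr)
    fix x y assume xy: "x \<in> S" "y \<in> S" "cell x = cell y" "x \<noteq> y"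
    then have "\<lfloor>2 * Re x\<rfloor> = \<lfloor>2 * Re y\<rfloor>" "\<lfloor>2 * Im x\<rfloor> = \<lfloor>2 * Im y\<rfloor>"
      by (auto simp: cell_def)
    then have "\<bar>2 * Re x - 2 * Re y\<bar> < 1" "\<bar>2 * Im x - 2 * Im y\<bar> < 1"
      by (simp_all add: abs_diff_less_one_if_floor_eq)
    then have "\<bar>Re (x - y)\<bar> < 1 / 2" "\<bar>Im (x - y)\<bar> < 1 / 2" unfolding abs_less_iff by auto
    then have "dist x y < 1" using cmod_le[of "x - y"] by (simp add: dist_norm)
    with sep xy show False by fastforce
  qed
  have sub: "cell ` S \<subseteq> {-2..2} \<times> {-2..2}"
  proof
    fix c assume "c \<in> cell ` S"
    then obtain x where "norm x \<le> 1" "c = cell x" using disc by auto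
    moreover have "\<bar>Re x\<bar> \<le> norm x" "\<bar>Im x\<bar> \<le> norm x" by (rule abs_Re_le_cmod abs_Im_le_cmod)+
    ultimately show "c \<in> {-2..2} \<times> {-2..2}"
      unfolding cell_def by (auto simp: le_floor_iff floor_le_iff abs_le_iff)
  qed
  have "finite (cell ` S)" by (rule finite_subset[OF sub]) simp
  then show "finite S" using finite_imageD[OF _ inj] by blast
  have "card S \<le> card ({-2..2::int} \<times> {-2..2::int})" by (rule card_inj_on_le[OF inj sub]) simp
  then show "card S \<le> 25" by simp
qed

lemma wide_D_pairs_card_le:
  assumes D: "direction_set D" and r: "9 / 10 < r"
  shows "finite {(v1, v2). D_pair D v1 v2 \<and> r < Im (cnj v1 * v2)}"
    and "card {(v1, v2). D_pair D v1 v2 \<and> r < Im (cnj v1 * v2)} \<le> 25"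
proof -
  define P where "P = {(v1, v2). D_pair D v1 v2 \<and> r < Im (cnj v1 * v2)}"
  have narrow: "v1 \<bullet> v2 < 1 / 2" if "(v1, v2) \<in> P" for v1 v2
  proof -
    have p: "D_pair D v1 v2" "9 / 10 < Im (cnj v1 * v2)" using that r by (auto simp: P_def)
    have "(9 / 10)\<^sup>2 < (Im (cnj v1 * v2))\<^sup>2" using p(2) by (intro power_strict_mono) auto
    moreover have "(v1 \<bullet> v2)\<^sup>2 + (Im (cnj v1 * v2))\<^sup>2 = 1"
      using inner_sq_add_Im_cnj_mult_sq D_pair_unit[OF D p(1)] by blast
    ultimately have "(v1 \<bullet> v2)\<^sup>2 < (1 / 2)\<^sup>2" by (simp add: power_divide)
    then show ?thesis by (rule power2_less_imp_less) simp
  qed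
  have inj: "inj_on fst P"
  proof (rule inj_onI)
    fix q q' assume "q \<in> P" "q' \<in> P" "fst q = fst q'"
    moreover obtain v1 v2 where "q = (v1, v2)" by fastforce
    moreover obtain w1 w2 where "q' = (w1, w2)" by fastforce
    ultimately show "q = q'" using D_pair_unique[OF D, of v1 v2 w2] by (simp add: P_def)
  qed
  have disc: "fst ` P \<subseteq> cball 0 1" using D_pair_unit(1)[OF D] by (force simp: P_def)
  have sep: "1 \<le> dist v1 w1" if m: "v1 \<in> fst ` P" "w1 \<in> fst ` P" and ne: "v1 \<noteq> w1"
    for v1 w1
  proof -
    obtain v2 w2 where p: "(v1, v2) \<in> P" and q: "(w1, w2) \<in> P"
      using m by (force simp: image_iff)
    have "v1 \<bullet> w1 < 1 / 2"
      using D_pair_firsts_inner_lt[OF D _ narrow[OF p] _ narrow[OF q] ne] p q by (simp add: P_def)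
    moreover have "norm v1 = 1" "norm w1 = 1" using p q D_pair_unit[OF D] by (auto simp: P_def)
    ultimately have "1\<^sup>2 < (dist v1 w1)\<^sup>2" using dot_norm_neg[of v1 w1] by (simp add: dist_norm)
    then show ?thesis using power2_less_imp_less[of 1 "dist v1 w1"] by simp
  qed
  have "finite (fst ` P)" "card (fst ` P) \<le> 25"
    using card_separated_subset_unit_disc[OF disc sep] by blast+
  then show "finite P" "card P \<le> 25" using finite_imageD[OF _ inj] card_image[OF inj] by simp_all
qed


lemma translate_open_halfspace:
  fixes w :: "'a::real_inner"
  shows "(+) a ` {y. 0 < w \<bullet> y} = {y. w \<bullet> a < w \<bullet> y}"
proof (intro set_eqI iffI)
  fix y assume "y \<in> (+) a ` {y. 0 < w \<bullet> y}"
  then show "y \<in> {y. w \<bullet> a < w \<bullet> y}" by (auto simp: inner_add_right)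
next
  fix y assume "y \<in> {y. w \<bullet> a < w \<bullet> y}"
  then show "y \<in> (+) a ` {y. 0 < w \<bullet> y}"
    by (intro image_eqI[of y _ "y - a"]) (auto simp: inner_diff_right)
qed

text \<open>The complement of a translated open half-plane is convex and contains 0 and p.\<close>
lemma translated_open_halfplane_misses_segment:
  assumes Q: "Q \<in> open_halfplanes v" and r: "0 \<le> r"
    and disj: "(+) a ` Q \<inter> (cball 0 r \<union> {p}) = {}"
  shows "(+) a ` Q \<inter> closed_segment 0 p = {}"
proof -
  have "\<exists>w. Q = {y. 0 < w \<bullet> y}"
  proof -
    from Q consider "Q = {y. 0 < (\<i> * v) \<bullet> y}" | "Q = {y. 0 < (- (\<i> * v)) \<bullet> y}"
      unfolding open_halfplanes_def Im_cnj_mult_eq_inner by auto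
    then show ?thesis by cases blast+
  qed
  then obtain w where "Q = {y. 0 < w \<bullet> y}" ..
  then have aQ: "(+) a ` Q = - {y. w \<bullet> y \<le> w \<bullet> a}"
    by (auto simp: translate_open_halfspace)
  have "0 \<in> cball 0 r" using r by simp
  then have "0 \<notin> (+) a ` Q" "p \<notin> (+) a ` Q" using disj by blast+
  then have "closed_segment 0 p \<subseteq> {y. w \<bullet> y \<le> w \<bullet> a}"
    by (intro closed_segment_subset convex_halfspace_le) (simp_all add: aQ)
  then show ?thesis by (auto simp: aQ)
qed

lemma inner_le_inner_if_in_segment:
  fixes x p w :: "'a::real_inner"
  assumes "x \<in> closed_segment 0 p" "0 < x \<bullet> w"
  shows "x \<bullet> w \<le> p \<bullet> w"
proof -
  obtain l where l: "0 \<le> l" "l \<le> 1" "x = l *\<^sub>R p"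
    using assms(1) by (auto simp: closed_segment_def)
  then have "0 < l * (p \<bullet> w)" using assms(2) by simp
  then have "0 < p \<bullet> w" using l(1) by (simp add: zero_less_mult_iff)
  then show ?thesis using l by (simp add: mult_left_le_one_le)
qed

lemma translated_pspan_add:
  assumes y: "y \<in> (+) a ` pspan u v" and "0 \<le> \<alpha>" "0 \<le> \<beta>"
  shows "y + \<alpha> *\<^sub>R u + \<beta> *\<^sub>R v \<in> (+) a ` pspan u v"
proof -
  obtain s t where st: "0 < s" "0 < t" "y = a + (s *\<^sub>R u + t *\<^sub>R v)"
    using y unfolding pspan_def by auto
  have "(s + \<alpha>) *\<^sub>R u + (t + \<beta>) *\<^sub>R v \<in> pspan u v"
    unfolding pspan_def using st assms(2,3) by force
  moreover have "y + \<alpha> *\<^sub>R u + \<beta> *\<^sub>R v = a + ((s + \<alpha>) *\<^sub>R u + (t + \<beta>) *\<^sub>R v)"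
    using st by (simp add: algebra_simps)
  ultimately show ?thesis by simp
qed

lemma translated_pspan_segment_endpoint:
  fixes x p :: complex
  assumes x: "x \<in> (+) a ` pspan u v" "x \<in> closed_segment 0 p" "x \<noteq> 0"
    and xPQ: "x = P *\<^sub>R u + Q *\<^sub>R v" and PQ: "0 \<le> P" "0 \<le> Q"
  shows "p \<in> (+) a ` pspan u v"
proof -
  obtain l where l: "0 \<le> l" "l \<le> 1" "x = l *\<^sub>R p"
    using x(2) by (auto simp: closed_segment_def)
  then have "0 < l" using x(3) by (cases "l = 0") auto
  define \<mu> where "\<mu> = 1 / l - 1"
  have "0 \<le> \<mu>" using l \<open>0 < l\<close> by (simp add: \<mu>_def)
  have "p = x + \<mu> *\<^sub>R x" using l \<open>0 < l\<close> by (simp add: \<mu>_def algebra_simps)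
  moreover have "\<mu> *\<^sub>R x = (\<mu> * P) *\<^sub>R u + (\<mu> * Q) *\<^sub>R v" by (simp add: xPQ scaleR_add_right)
  ultimately have p: "p = x + (\<mu> * P) *\<^sub>R u + (\<mu> * Q) *\<^sub>R v" by (simp add: add.assoc)
  show ?thesis
    unfolding p by (rule translated_pspan_add[OF x(1)]) (use PQ \<open>0 \<le> \<mu>\<close> in simp_all)
qed

text \<open>Moving x by -P u1 lands on the ray along u2, which forces Q > r; moving it by
  -(P + Q k) u1, with k = u1 \<bullet> u2, lands on Q (u2 - k u1), of length Q s.\<close>
lemma wedge_escape_bound:
  fixes u1 u2 x :: complex
  assumes n1: "norm u1 = 1" and n2: "norm u2 = 1" and k: "0 \<le> u1 \<bullet> u2"
    and s: "0 \<le> s" "(u1 \<bullet> u2)\<^sup>2 + s\<^sup>2 = 1"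
    and x: "x = P *\<^sub>R u1 + Q *\<^sub>R u2" "norm x \<le> 1" and P: "0 < P" and r: "0 < r"
    and far: "\<And>\<alpha> \<beta>. 0 \<le> \<alpha> \<Longrightarrow> 0 \<le> \<beta> \<Longrightarrow> r < norm (x - \<alpha> *\<^sub>R u1 + \<beta> *\<^sub>R u2)"
  shows "r < s \<and> r < x \<bullet> u2"
proof -
  define k where "k = u1 \<bullet> u2"
  have Q: "r < Q"
  proof (rule ccontr)
    assume "\<not> r < Q"
    have "x - P *\<^sub>R u1 + max 0 (- Q) *\<^sub>R u2 = (Q + max 0 (- Q)) *\<^sub>R u2"
      by (simp add: x algebra_simps)
    then have "r < \<bar>Q + max 0 (- Q)\<bar>" using far[of P "max 0 (- Q)"] P n2 by simp
    with \<open>\<not> r < Q\<close> r show False by linarith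
  qed
  have "(norm (u2 - k *\<^sub>R u1))\<^sup>2 = s\<^sup>2"
    using norm_scaleR_add_scaleR_sq[OF n1 n2, of "- k" 1] s(2) by (simp add: k_def power2_eq_square)
  then have "norm (u2 - k *\<^sub>R u1) = s" using s(1) by (simp add: power2_eq_iff_nonneg)
  moreover have "x - (P + Q * k) *\<^sub>R u1 + 0 *\<^sub>R u2 = Q *\<^sub>R (u2 - k *\<^sub>R u1)"
    by (simp add: x algebra_simps)
  ultimately have "r < Q * s"
    using far[of "P + Q * k" 0] P Q r k by (simp add: k_def)
  moreover have "Q \<le> 1"
  proof -
    have "Q\<^sup>2 \<le> (norm x)\<^sup>2"
      using norm_scaleR_add_scaleR_sq[OF n1 n2, of P Q] x(1) P Q r k by simp
    also have "\<dots> \<le> 1" using x(2) by (simp add: power_le_one)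
    finally show ?thesis using power2_le_imp_le[of Q 1] by simp
  qed
  then have "Q * s \<le> s" using mult_left_le_one_le[of s Q] s(1) Q r by simp
  moreover have "x \<bullet> u2 = P * k + Q"
    using n2 by (simp add: x k_def inner_add_left flip: power2_norm_eq_inner)
  moreover have "0 \<le> P * k" using P k by (simp add: k_def)
  ultimately show ?thesis using \<open>r < Q * s\<close> Q by linarith
qed

lemma translated_wedge_meets_segment_imp_cap:
  fixes u1 u2 :: complex
  assumes n1: "norm u1 = 1" and n2: "norm u2 = 1"
    and k: "0 \<le> u1 \<bullet> u2" and s: "0 < Im (cnj u1 * u2)" and r: "0 < r" and p: "norm p \<le> 1"
    and disj: "(+) a ` pspan (- u1) u2 \<inter> (cball 0 r \<union> {p}) = {}"
    and x: "x \<in> (+) a ` pspan (- u1) u2" "x \<in> closed_segment 0 p"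
  shows "r < Im (cnj u1 * u2) \<and> (r < p \<bullet> - u1 \<or> r < p \<bullet> u2)"
proof -
  have far: "r < norm (x - \<alpha> *\<^sub>R u1 + \<beta> *\<^sub>R u2)" if "0 \<le> \<alpha>" "0 \<le> \<beta>" for \<alpha> \<beta>
    using translated_pspan_add[OF x(1) that] disj by (force simp: not_le)
  obtain P Q where xPQ: "x = P *\<^sub>R u1 + Q *\<^sub>R u2"
    using complex_eq_scaleR_combination s by (metis less_irrefl)
  obtain l where l: "0 \<le> l" "l \<le> 1" "x = l *\<^sub>R p"
    using x(2) by (auto simp: closed_segment_def)
  have nx: "norm x \<le> 1" using l p by (simp add: mult_le_one)
  have "x \<noteq> 0" using far[of 0 0] r by auto
  have "\<not> (P \<le> 0 \<and> 0 \<le> Q)"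
  proof
    assume "P \<le> 0 \<and> 0 \<le> Q"
    then have "p \<in> (+) a ` pspan (- u1) u2"
      using translated_pspan_segment_endpoint[OF x \<open>x \<noteq> 0\<close>, of "- P" Q] xPQ by simp
    then show False using disj by blast
  qed
  then consider "0 < P" | "Q < 0" by linarith
  then have "r < Im (cnj u1 * u2) \<and> (r < x \<bullet> - u1 \<or> r < x \<bullet> u2)"
  proof cases
    case 1
    have "r < Im (cnj u1 * u2) \<and> r < x \<bullet> u2"
      by (rule wedge_escape_bound[OF n1 n2 k _ _ xPQ nx 1 r far])
        (use s inner_sq_add_Im_cnj_mult_sq[OF n1 n2] in auto)
    then show ?thesis by blast
  next
    case 2
    text \<open>The same wedge is described by u1' = -u2 and u2' = -u1, with coefficients -Q, -P.\<close>
    have "r < Im (cnj u1 * u2) \<and> r < x \<bullet> - u1"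
    proof (rule wedge_escape_bound[of "- u2" "- u1" _ x "- Q" "- P"])
      show "(- u2 \<bullet> - u1)\<^sup>2 + (Im (cnj u1 * u2))\<^sup>2 = 1"
        using inner_sq_add_Im_cnj_mult_sq[OF n1 n2] by (simp add: inner_commute)
      show "r < norm (x - \<alpha> *\<^sub>R - u2 + \<beta> *\<^sub>R - u1)" if "0 \<le> \<alpha>" "0 \<le> \<beta>" for \<alpha> \<beta>
        using far[OF that(2,1)] by (simp add: algebra_simps)
    qed (use n1 n2 k s xPQ nx 2 r in \<open>auto simp: inner_commute\<close>)
    then show ?thesis by blast
  qed
  moreover have "r < p \<bullet> w" if "r < x \<bullet> w" for w
    using inner_le_inner_if_in_segment[OF x(2), of w] that r by linarith
  ultimately show ?thesis by blast
qed

lemma unsafe_point_in_wide_pair_cap: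
  assumes D: "direction_set D" and al: "alpha_dirs D \<le> pi / 2" and r: "0 < r"
    and p: "p \<in> unsafe_set D r"
  shows "\<exists>v1 v2. D_pair D v1 v2 \<and> r < Im (cnj v1 * v2) \<and>
           (\<exists>w\<in>{v1, - v1, v2, - v2}. p \<in> cap w r)"
proof -
  have p1: "norm p \<le> 1" using p unfolding unsafe_set_def by simp
  have capI: "p \<in> cap w r" if "r < p \<bullet> w" for w
    using that p1 unfolding cap_def by simp
  obtain x where x: "x \<in> closed_segment 0 p" "x \<notin> CH_dirs D (cball 0 r \<union> {p})"
    using p unfolding unsafe_set_def safe_pt_def by auto
  then obtain a Q where Q: "Q \<in> Q_dirs D" "x \<in> (+) a ` Q"
    and disj: "(+) a ` Q \<inter> (cball 0 r \<union> {p}) = {}"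
    unfolding CH_dirs_def T_dirs_def by auto
  from Q(1) consider (halfplane) v where "Q \<in> open_halfplanes v"
    | (wedge) v1 v2 where "D_pair D v1 v2" "Q = pspan (- v1) v2 \<or> Q = pspan v1 (- v2)"
    unfolding Q_dirs_def by auto
  then show ?thesis
  proof cases
    case halfplane
    then show ?thesis
      using translated_open_halfplane_misses_segment[OF _ _ disj] r x(1) Q(2) by fastforce
  next
    case wedge
    note n = D_pair_unit[OF D wedge(1)] and acute = D_pair_acute[OF D al wedge(1)]
    from wedge(2) show ?thesis
    proof
      assume "Q = pspan (- v1) v2"
      then have "r < Im (cnj v1 * v2) \<and> (r < p \<bullet> - v1 \<or> r < p \<bullet> v2)"
        using translated_wedge_meets_segment_imp_cap[OF n acute r p1] disj x(1) Q(2) by blast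
      then show ?thesis using wedge(1) capI by blast
    next
      assume "Q = pspan v1 (- v2)"
      then have "r < Im (cnj (- v1) * - v2) \<and> (r < p \<bullet> - (- v1) \<or> r < p \<bullet> - v2)"
        using translated_wedge_meets_segment_imp_cap[of "- v1" "- v2"] n acute r p1 disj x(1) Q(2) by simp
      then have "r < Im (cnj v1 * v2)" "r < p \<bullet> v1 \<or> r < p \<bullet> - v2"
        by (simp_all only: minus_minus complex_cnj_minus mult_minus_left mult_minus_right)
      then show ?thesis using wedge(1) capI by blast
    qed
  qed
qed

lemma unsafe_set_covered_by_caps:
  assumes D: "direction_set D" and al: "alpha_dirs D \<le> pi / 2" and r: "9 / 10 < r"
  shows "\<exists>F. finite F \<and> card F \<le> 100 \<and> (\<forall>X\<in>F. \<exists>u. norm u = 1 \<and> X = cap u r) \<and>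
           unsafe_set D r \<subseteq> \<Union>F"
proof -
  define P where "P = {(v1, v2). D_pair D v1 v2 \<and> r < Im (cnj v1 * v2)}"
  define W where "W = fst ` P \<union> uminus ` fst ` P \<union> snd ` P \<union> uminus ` snd ` P"
  have P: "finite P" "card P \<le> 25" using wide_D_pairs_card_le[OF D r] by (simp_all add: P_def)
  have "card W \<le> card P + card P + card P + card P"
    unfolding W_def by (intro card_Un_le[THEN order_trans] add_mono card_image_le
        order_trans[OF card_image_le] finite_imageI P(1))
  then have "finite ((\<lambda>w. cap w r) ` W) \<and> card ((\<lambda>w. cap w r) ` W) \<le> 100"
    using P card_image_le[of W "\<lambda>w. cap w r"] by (simp add: W_def)
  moreover have "\<forall>w\<in>W. norm w = 1" using D_pair_unit[OF D] by (auto simp: W_def P_def)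
  moreover have "unsafe_set D r \<subseteq> \<Union>((\<lambda>w. cap w r) ` W)"
  proof
    fix p assume "p \<in> unsafe_set D r"
    moreover have "0 < r" using r by linarith
    ultimately obtain v1 v2 where "D_pair D v1 v2" "r < Im (cnj v1 * v2)"
      and cap: "\<exists>w\<in>{v1, - v1, v2, - v2}. p \<in> cap w r"
      using unsafe_point_in_wide_pair_cap[OF D al] by blast
    then have "(v1, v2) \<in> P" by (simp add: P_def)
    then have "v1 \<in> fst ` P" "v2 \<in> snd ` P" by force+
    then have "{v1, - v1, v2, - v2} \<subseteq> W" unfolding W_def by blast
    then show "p \<in> \<Union>((\<lambda>w. cap w r) ` W)" using cap by blast
  qed
  ultimately show ?thesis by blast
qed

lemma cap_base_le_height: "cap_base t \<le> 2 * sqrt (2 * cap_height t)"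
proof -
  have "1 - t\<^sup>2 \<le> 2 * (1 - t)" using zero_le_power2[of "1 - t"] by (simp add: power2_diff)
  then show ?thesis unfolding cap_base_def cap_height_def by simp
qed

lemma sqrt_sqrt_eq_powr: "0 \<le> x \<Longrightarrow> sqrt (sqrt x) = x powr (1 / 4)"
  by (simp add: powr_half_sqrt[symmetric] powr_powr)

lemma unsafe_set_covered_by_small_caps:
  assumes D: "direction_set D" and al: "alpha_dirs D \<le> pi / 2" and c: "0 < c" and L: "0 < L"
    and small: "c * sqrt L < 1 / 10" and r: "r = 1 - c * sqrt L"
  shows "\<exists>F. finite F \<and> card F \<le> 100 \<and>
           (\<forall>X\<in>F. \<exists>u t. norm u = 1 \<and> -1 < t \<and> t < 1 \<and> X = cap u t \<and>
              cap_base t \<le> 2 * sqrt (2 * c) * L powr (1/4) \<and> cap_height t \<le> c * sqrt L) \<and>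
           unsafe_set D r \<subseteq> \<Union>F"
proof -
  have r_bounds: "9 / 10 < r" "-1 < r" "r < 1" using small c L by (simp_all add: r)
  obtain F where F: "finite F" "card F \<le> 100" "\<forall>X\<in>F. \<exists>u. norm u = 1 \<and> X = cap u r"
    "unsafe_set D r \<subseteq> \<Union>F"
    using unsafe_set_covered_by_caps[OF D al r_bounds(1)] by blast
  have "cap_base r \<le> 2 * sqrt (2 * c) * L powr (1 / 4)"
    using cap_base_le_height[of r] L c
    by (simp add: cap_height_def r real_sqrt_mult sqrt_sqrt_eq_powr)
  moreover have "cap_height r = c * sqrt L" by (simp add: cap_height_def r)
  ultimately have "\<forall>X\<in>F. \<exists>u t. norm u = 1 \<and> -1 < t \<and> t < 1 \<and> X = cap u t \<and>
      cap_base t \<le> 2 * sqrt (2 * c) * L powr (1/4) \<and> cap_height t \<le> c * sqrt L"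
    using F(3) r_bounds by fastforce
  with F show ?thesis by blast
qed

theorem lemma3p12:
  fixes c :: real
  assumes "c > 0"
  shows "\<exists>(K::nat) C1 C2 (N0::nat). \<forall>n\<ge>N0. \<forall>D r.
     direction_set D \<longrightarrow> 0 \<le> alpha_dirs D \<longrightarrow> alpha_dirs D \<le> pi / 2 \<longrightarrow>
     r = 1 - c * sqrt (ln (real n) / real n) \<longrightarrow>
     (\<exists>F. finite F \<and> card F \<le> K \<and>
        (\<forall>X\<in>F. \<exists>u t. norm u = 1 \<and> -1 < t \<and> t < 1 \<and> X = cap u t \<and>
            cap_base t \<le> C1 * (ln (real n) / real n) powr (1/4) \<and>
            cap_height t \<le> C2 * sqrt (ln (real n) / real n)) \<and>
        unsafe_set D r \<subseteq> \<Union>F)"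
proof -
  have "(\<lambda>n. c * sqrt (ln (real n) / real n)) \<longlonglongrightarrow> 0"
    using tendsto_mult_right_zero[OF tendsto_real_sqrt[OF lim_ln_over_n, unfolded real_sqrt_zero]]
    by simp
  then have "\<forall>\<^sub>F n in sequentially. c * sqrt (ln (real n) / real n) < 1 / 10"
    by (rule order_tendstoD) simp
  then obtain N where N: "\<And>n. N \<le> n \<Longrightarrow> c * sqrt (ln (real n) / real n) < 1 / 10"
    by (auto simp: eventually_sequentially)
  show ?thesis
  proof (rule exI[of _ 100], rule exI[of _ "2 * sqrt (2 * c)"], rule exI[of _ c],
      rule exI[of _ "max N 2"], intro allI impI)
    fix n :: nat and D r
    assume "max N 2 \<le> n" "direction_set D" "0 \<le> alpha_dirs D" "alpha_dirs D \<le> pi / 2"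
      "r = 1 - c * sqrt (ln (real n) / real n)"
    moreover have "0 < ln (real n) / real n" using \<open>max N 2 \<le> n\<close> by simp
    ultimately show "\<exists>F. finite F \<and> card F \<le> 100 \<and>
        (\<forall>X\<in>F. \<exists>u t. norm u = 1 \<and> -1 < t \<and> t < 1 \<and> X = cap u t \<and>
          cap_base t \<le> 2 * sqrt (2 * c) * (ln (real n) / real n) powr (1/4) \<and>
          cap_height t \<le> c * sqrt (ln (real n) / real n)) \<and>
        unsafe_set D r \<subseteq> \<Union>F"
      using unsafe_set_covered_by_small_caps[OF _ _ assms] N by simp
  qed
qed

end
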